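(* Let $N\ge 2$ and $M\ge 1$ be integers and $P_0,\dots,P_{N-1}\ge 0$. Let $\{s_n^{(m)}: 0\le n\le N-1,\ 1\le m\le M\}$ be independent complex random variables such that, for each $n$, $s_n^{(1)},\dots,s_n^{(M)}$ are identically distributed with $\mathbb{E}[|s_n^{(m)}|^2]=1$ and $\mathbb{E}[|s_n^{(m)}|^4]=\mu_{4,n}$. Define the averaged autocorrelation $$\overline r_k=\frac{1}{M}\sum_{m=1}^M\sum_{n=0}^{N-1}P_n|s_n^{(m)}|^2e^{j\frac{2\pi}{N}nk},\qquad k=0,\dots,N-1.$$ Then $$\mathbb{E}[|\overline r_0|^2]=\frac{1}{M}\sum_{n=0}^{N-1}P_n^2(\mu_{4,n}-1)+\Big(\sum_{n=0}^{N-1}P_n\Big)^2,$$ $$\sum_{k=1}^{N-1}\mathbb{E}[|\overline r_k|^2]=\frac{N-1}{M}\sum_{n=0}^{N-1}P_n^2(\mu_{4,n}-1)+N\sum_{n=0}^{N-1}P_n^2-\Big(\sum_{n=0}^{N-1}P_n\Big)^2,$$ and consequently the matched-filter sensing SINR for target $q$ under coherent processing of the $M$ symbols is $$\mathrm{SINR}_q^{\mathrm{MF}}=\frac{\sigma_{\alpha_q}^2\,\mathbb{E}[|\overline r_0|^2]}{\frac{\sum_{i\ne q}\sigma_{\alpha_i}^2}{N-1}\sum_{k=1}^{N-1}\mathbb{E}[|\overline r_k|^2]+\frac{\sigma_z^2}{M}\sum_{n=0}^{N-1}P_n}.$$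
   Context: Setting: a monostatic OFDM sensing system with $N$ subcarriers transmits $M$ independent OFDM symbols $x^{(m)}[t]=\frac{1}{\sqrt N}\sum_{n}\sqrt{P_n}s_n^{(m)}e^{j\frac{2\pi}{N}nt}$; the echo contains $Q$ point targets with reflection coefficients $\alpha_i\sim\mathcal{CN}(0,\sigma_{\alpha_i}^2)$ and integer delays, plus AWGN of variance $\sigma_z^2$. The receiver correlates with the known transmitted symbols (matched filtering) and averages coherently over the $M$ symbols. The matched-filter SINR of target $q$ is the expected mainlobe power $\sigma_{\alpha_q}^2\mathbb{E}[|\overline r_0|^2]$ divided by the expected interference from the other targets (whose relative delays are modeled as uniformly distributed over the nonzero lags $\{1,\dots,N-1\}$, so each contributes $\sigma_{\alpha_i}^2$ times the average of $\mathbb{E}[|\overline r_k|^2]$ over $k=1,\dots,N-1$) plus the expected filtered noise power. *)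

theory Defs
  imports "HOL-Probability.Probability"
begin

definition rbar :: "nat \<Rightarrow> nat \<Rightarrow> (nat \<Rightarrow> real) \<Rightarrow> (nat \<Rightarrow> nat \<Rightarrow> 'a \<Rightarrow> complex)
    \<Rightarrow> nat \<Rightarrow> 'a \<Rightarrow> complex" where
  "rbar N M P s k \<omega> = (1 / of_nat M) *
     (\<Sum>m\<in>{1..M}. \<Sum>n<N. of_real (P n * (cmod (s n m \<omega>))\<^sup>2)
        * exp (\<i> * of_real (2 * pi * real n * real k / real N)))"

text \<open>Arguments: E0 = E|rbar_0|^2, Ssum = sum_{k=1}^{N-1} E|rbar_k|^2,
  noise = expected filtered noise power.\<close>
definition mf_sinr :: "nat \<Rightarrow> (nat \<Rightarrow> real) \<Rightarrow> nat \<Rightarrow> nat \<Rightarrow> real \<Rightarrow> real \<Rightarrow> real \<Rightarrow> real" where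
  "mf_sinr N sa Q q E0 Ssum noise =
     sa q * E0 / ((\<Sum>i\<in>{..<Q} - {q}. sa i) / real (N - 1) * Ssum + noise)"

end

theory Submission
  imports Defs
begin

text \<open>Each \<open>rbar k\<close> is a fixed complex linear combination of the independent real variables
  \<open>(cmod (s n m))\<^sup>2\<close>, which have mean 1 and variance \<open>\<mu>4 n - 1\<close>. The second moment of such a
  combination is the squared modulus of its mean plus the variance-weighted sum of the squared
  moduli of its coefficients. The mean of \<open>rbar k\<close> is the discrete Fourier transform of \<open>P\<close> at
  lag \<open>k\<close>; by Parseval's identity its squared moduli sum to \<open>N * (\<Sum>n<N. (P n)\<^sup>2)\<close> over all
  lags, and the lag 0 term is \<open>(\<Sum>n<N. P n)\<^sup>2\<close>.\<close>

lemma norm_sum_squared_eq_double_sum: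
  fixes z :: "'i \<Rightarrow> complex"
  shows "(cmod (\<Sum>i\<in>I. z i))\<^sup>2 = (\<Sum>i\<in>I. \<Sum>j\<in>I. Re (z i * cnj (z j)))"
proof -
  have "(cmod (\<Sum>i\<in>I. z i))\<^sup>2 = Re (complex_of_real ((cmod (\<Sum>i\<in>I. z i))\<^sup>2))"
    by (simp only: Re_complex_of_real)
  also have "complex_of_real ((cmod (\<Sum>i\<in>I. z i))\<^sup>2) = (\<Sum>i\<in>I. z i) * cnj (\<Sum>j\<in>I. z j)"
    by (rule complex_norm_square)
  also have "\<dots> = (\<Sum>i\<in>I. \<Sum>j\<in>I. z i * cnj (z j))"
    by (simp add: sum_product)
  finally show ?thesis
    by (simp only: Re_sum)
qed

lemma (in prob_space) indep_vars_expectation_mult: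
  fixes X :: "'i \<Rightarrow> 'a \<Rightarrow> real"
  assumes indep: "indep_vars (\<lambda>_. borel) X I" and ij: "i \<in> I" "j \<in> I" "i \<noteq> j"
    and int: "integrable M (X i)" "integrable M (X j)"
  shows "expectation (\<lambda>\<omega>. X i \<omega> * X j \<omega>) = expectation (X i) * expectation (X j)"
    and "integrable M (\<lambda>\<omega>. X i \<omega> * X j \<omega>)"
proof -
  have indep_ij: "indep_vars (\<lambda>_. borel) X {i, j}"
    using indep_vars_subset[OF indep] ij by auto
  have int_ij: "\<And>k. k \<in> {i, j} \<Longrightarrow> integrable M (X k)"
    using int by auto
  show "expectation (\<lambda>\<omega>. X i \<omega> * X j \<omega>) = expectation (X i) * expectation (X j)"
    using indep_vars_lebesgue_integral[OF _ indep_ij int_ij] \<open>i \<noteq> j\<close> by simp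
  show "integrable M (\<lambda>\<omega>. X i \<omega> * X j \<omega>)"
    using indep_vars_integrable[OF _ indep_ij int_ij] \<open>i \<noteq> j\<close> by simp
qed

lemma (in prob_space) expectation_norm_sum_indep_squared:
  fixes X :: "'i \<Rightarrow> 'a \<Rightarrow> real" and a :: "'i \<Rightarrow> complex"
  assumes "finite I" and indep: "indep_vars (\<lambda>_. borel) X I"
    and square_int: "\<And>i. i \<in> I \<Longrightarrow> integrable M (\<lambda>\<omega>. (X i \<omega>)\<^sup>2)"
  shows "expectation (\<lambda>\<omega>. (cmod (\<Sum>i\<in>I. a i * of_real (X i \<omega>)))\<^sup>2)
       = (cmod (\<Sum>i\<in>I. a i * of_real (expectation (X i))))\<^sup>2
         + (\<Sum>i\<in>I. (cmod (a i))\<^sup>2 * variance (X i))"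
proof -
  define m where "m i = expectation (X i)" for i
  define v where "v i = variance (X i)" for i
  have int: "integrable M (X i)" if "i \<in> I" for i
  proof (rule square_integrable_imp_integrable)
    show "X i \<in> borel_measurable M"
      using indep that unfolding indep_vars_def2 by blast
  qed (rule square_int[OF that])
  have int_prod: "integrable M (\<lambda>\<omega>. X i \<omega> * X j \<omega>)" if "i \<in> I" "j \<in> I" for i j
  proof (cases "i = j")
    case True
    then show ?thesis
      using square_int[OF that(1)] by (simp add: power2_eq_square)
  next
    case False
    show ?thesis
      using indep_vars_expectation_mult(2)[OF indep that False int[OF that(1)] int[OF that(2)]] .
  qed
  have expectation_prod: "expectation (\<lambda>\<omega>. X i \<omega> * X j \<omega>) = m i * m j + (if i = j then v i else 0)"
    if "i \<in> I" "j \<in> I" for i j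
  proof (cases "i = j")
    case True
    have "v i = expectation (\<lambda>\<omega>. (X i \<omega>)\<^sup>2) - (m i)\<^sup>2"
      unfolding v_def m_def by (rule variance_eq[OF int[OF that(1)] square_int[OF that(1)]])
    then show ?thesis
      using True by (simp add: power2_eq_square)
  next
    case False
    then show ?thesis
      using indep_vars_expectation_mult(1)[OF indep that False int[OF that(1)] int[OF that(2)]]
      by (simp add: m_def)
  qed
  define c where "c i j = Re (a i * cnj (a j))" for i j
  have "(cmod (\<Sum>i\<in>I. a i * of_real (X i \<omega>)))\<^sup>2 = (\<Sum>i\<in>I. \<Sum>j\<in>I. c i j * (X i \<omega> * X j \<omega>))"
    for \<omega>
    by (simp add: norm_sum_squared_eq_double_sum c_def algebra_simps)
  then have "expectation (\<lambda>\<omega>. (cmod (\<Sum>i\<in>I. a i * of_real (X i \<omega>)))\<^sup>2)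
      = (\<Sum>i\<in>I. \<Sum>j\<in>I. c i j * expectation (\<lambda>\<omega>. X i \<omega> * X j \<omega>))"
    using int_prod by (simp add: integral_sum integrable_sum)
  also have "\<dots> = (\<Sum>i\<in>I. \<Sum>j\<in>I. c i j * (m i * m j + (if i = j then v i else 0)))"
    using expectation_prod by simp
  also have "\<dots> = (\<Sum>i\<in>I. \<Sum>j\<in>I. c i j * (m i * m j)) + (\<Sum>i\<in>I. c i i * v i)"
    using \<open>finite I\<close>
    by (simp add: distrib_left sum.distrib if_distrib[of "(*) _"] cong: if_cong)
  also have "\<dots> = (cmod (\<Sum>i\<in>I. a i * of_real (m i)))\<^sup>2 + (\<Sum>i\<in>I. (cmod (a i))\<^sup>2 * v i)"
  proof -
    have "(cmod (\<Sum>i\<in>I. a i * of_real (m i)))\<^sup>2 = (\<Sum>i\<in>I. \<Sum>j\<in>I. c i j * (m i * m j))"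
      by (simp add: norm_sum_squared_eq_double_sum c_def algebra_simps)
    moreover have "c i i = (cmod (a i))\<^sup>2" for i
      by (simp add: c_def complex_mult_cnj cmod_power2)
    ultimately show ?thesis
      by simp
  qed
  finally show ?thesis
    by (simp add: m_def v_def)
qed

lemma sum_cis_roots_of_unity_orthogonal:
  assumes "n < N" "n' < N"
  shows "(\<Sum>k<N. cis (2 * pi * real n * real k / real N) * cnj (cis (2 * pi * real n' * real k / real N)))
       = (if n = n' then of_nat N else 0)"
proof -
  define w where "w j = cis (2 * pi * real j / real N)" for j :: nat
  define u where "u = w n * cnj (w n')"
  have w_power: "w j ^ k = cis (2 * pi * real j * real k / real N)" for j k
    unfolding w_def Complex.DeMoivre by (simp add: mult_ac)
  have "cis (2 * pi * real n * real k / real N) * cnj (cis (2 * pi * real n' * real k / real N)) = u ^ k" for k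
    by (simp add: u_def power_mult_distrib flip: w_power complex_cnj_power)
  then have sum_eq: "(\<Sum>k<N. cis (2 * pi * real n * real k / real N) * cnj (cis (2 * pi * real n' * real k / real N)))
      = (\<Sum>k<N. u ^ k)"
    by simp
  have root: "w j ^ N = 1" for j
    using assms unfolding w_def Complex.DeMoivre by simp
  show ?thesis
  proof (cases "n = n'")
    case True
    then have "u = 1"
      by (simp add: u_def w_def cis_cnj cis_mult)
    then show ?thesis
      using True sum_eq by simp
  next
    case False
    have "inj_on w {..<N}"
      using Complex.bij_betw_roots_unity[of N] assms unfolding w_def bij_betw_def by simp
    then have "w n \<noteq> w n'"
      using False assms by (auto dest: inj_onD)
    have "cnj (w n') * w n' = 1"
      by (simp add: w_def cis_cnj cis_mult)
    then have "u * w n' = w n"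
      by (simp add: u_def mult.assoc)
    with \<open>w n \<noteq> w n'\<close> have "u \<noteq> 1"
      by auto
    moreover have "u ^ N = 1"
      using root by (simp add: u_def power_mult_distrib flip: complex_cnj_power)
    ultimately show ?thesis
      using False sum_eq by (simp add: sum_gp_strict)
  qed
qed

lemma sum_norm_dft_squared:
  fixes a :: "nat \<Rightarrow> complex"
  shows "(\<Sum>k<N. (cmod (\<Sum>n<N. a n * cis (2 * pi * real n * real k / real N)))\<^sup>2)
       = real N * (\<Sum>n<N. (cmod (a n))\<^sup>2)"
proof -
  define e where "e n k = cis (2 * pi * real n * real k / real N)" for n k :: nat
  have "(\<Sum>k<N. (cmod (\<Sum>n<N. a n * e n k))\<^sup>2)
      = (\<Sum>k<N. \<Sum>n<N. \<Sum>n'<N. Re (a n * e n k * cnj (a n' * e n' k)))"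
    by (simp only: norm_sum_squared_eq_double_sum)
  also have "\<dots> = (\<Sum>n<N. \<Sum>n'<N. \<Sum>k<N. Re (a n * e n k * cnj (a n' * e n' k)))"
    by (subst sum.swap) (rule sum.cong[OF refl sum.swap])
  also have "\<dots> = (\<Sum>n<N. \<Sum>n'<N. Re (a n * cnj (a n') * (\<Sum>k<N. e n k * cnj (e n' k))))"
    by (simp add: sum_distrib_left mult_ac)
  also have "\<dots> = (\<Sum>n<N. \<Sum>n'<N. if n = n' then real N * (cmod (a n))\<^sup>2 else 0)"
  proof -
    have "(\<Sum>k<N. e n k * cnj (e n' k)) = (if n = n' then of_nat N else 0)"
      if "n < N" "n' < N" for n n'
      unfolding e_def by (rule sum_cis_roots_of_unity_orthogonal[OF that])
    then show ?thesis
      by (intro sum.cong refl) (simp add: cmod_power2 flip: power2_eq_square)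
  qed
  finally show ?thesis
    by (simp add: e_def sum_distrib_left)
qed

lemma rbar_eq_weighted_sum:
  "rbar N M P s k \<omega> = (\<Sum>(n, m)\<in>{..<N} \<times> {1..M}.
      of_real (P n / real M) * cis (2 * pi * real n * real k / real N)
      * of_real ((cmod (s n m \<omega>))\<^sup>2))"
proof -
  have "rbar N M P s k \<omega> = (\<Sum>m\<in>{1..M}. \<Sum>n<N.
      of_real (P n / real M) * cis (2 * pi * real n * real k / real N)
      * of_real ((cmod (s n m \<omega>))\<^sup>2))"
    unfolding rbar_def sum_distrib_left
    by (intro sum.cong refl) (simp add: cis_conv_exp)
  also have "\<dots> = (\<Sum>(n, m)\<in>{..<N} \<times> {1..M}.
      of_real (P n / real M) * cis (2 * pi * real n * real k / real N)
      * of_real ((cmod (s n m \<omega>))\<^sup>2))"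
    by (subst sum.swap) (simp add: sum.cartesian_product)
  finally show ?thesis .
qed

lemma expectation_norm_rbar_squared:
  fixes \<Omega> :: "'a measure" and s :: "nat \<Rightarrow> nat \<Rightarrow> 'a \<Rightarrow> complex"
  assumes "prob_space \<Omega>" and "M \<ge> 1"
    and indep: "prob_space.indep_vars \<Omega> (\<lambda>_. borel) (\<lambda>(n, m). s n m) ({..<N} \<times> {1..M})"
    and fourth_int: "\<And>n m. n < N \<Longrightarrow> m \<in> {1..M} \<Longrightarrow> integrable \<Omega> (\<lambda>\<omega>. (cmod (s n m \<omega>)) ^ 4)"
    and second: "\<And>n m. n < N \<Longrightarrow> m \<in> {1..M} \<Longrightarrow> (\<integral>\<omega>. (cmod (s n m \<omega>))\<^sup>2 \<partial>\<Omega>) = 1"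
    and fourth: "\<And>n m. n < N \<Longrightarrow> m \<in> {1..M} \<Longrightarrow> (\<integral>\<omega>. (cmod (s n m \<omega>)) ^ 4 \<partial>\<Omega>) = \<mu>4 n"
  shows "(\<integral>\<omega>. (cmod (rbar N M P s k \<omega>))\<^sup>2 \<partial>\<Omega>)
       = (cmod (\<Sum>n<N. of_real (P n) * cis (2 * pi * real n * real k / real N)))\<^sup>2
         + 1 / real M * (\<Sum>n<N. (P n)\<^sup>2 * (\<mu>4 n - 1))"
proof -
  interpret prob_space \<Omega> by fact
  define I where "I = {..<N} \<times> {1..M}"
  define X where "X i \<omega> = (cmod (s (fst i) (snd i) \<omega>))\<^sup>2" for i \<omega>
  define a where "a i = of_real (P (fst i) / real M) * cis (2 * pi * real (fst i) * real k / real N)"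
    for i :: "nat \<times> nat"
  have X_squared: "(X i \<omega>)\<^sup>2 = (cmod (s (fst i) (snd i) \<omega>)) ^ 4" for i \<omega>
    by (simp add: X_def flip: power_mult)
  have "indep_vars (\<lambda>_. borel) (\<lambda>i \<omega>. (cmod ((\<lambda>(n, m). s n m) i \<omega>))\<^sup>2) I"
    unfolding I_def by (rule indep_vars_compose2[OF indep]) simp
  then have indep_X: "indep_vars (\<lambda>_. borel) X I"
    by (simp add: X_def[abs_def] split_def)
  have square_int: "integrable \<Omega> (\<lambda>\<omega>. (X i \<omega>)\<^sup>2)" if "i \<in> I" for i
    using that fourth_int by (auto simp: X_squared I_def)
  have mean: "expectation (X i) = 1" if "i \<in> I" for i
    using that second by (auto simp: X_def[abs_def] I_def)
  have variance: "variance (X i) = \<mu>4 (fst i) - 1" if "i \<in> I" for i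
    using that square_int[OF that] fourth mean[OF that] indep_X
    by (subst variance_eq) (auto simp: X_squared I_def indep_vars_def
        intro: square_integrable_imp_integrable)
  have "(\<integral>\<omega>. (cmod (rbar N M P s k \<omega>))\<^sup>2 \<partial>\<Omega>)
      = expectation (\<lambda>\<omega>. (cmod (\<Sum>i\<in>I. a i * of_real (X i \<omega>)))\<^sup>2)"
    by (simp add: rbar_eq_weighted_sum I_def a_def X_def split_def)
  also have "\<dots> = (cmod (\<Sum>i\<in>I. a i))\<^sup>2 + (\<Sum>i\<in>I. (cmod (a i))\<^sup>2 * (\<mu>4 (fst i) - 1))"
    using expectation_norm_sum_indep_squared[OF _ indep_X square_int, of a] mean variance
    by (simp add: I_def)
  also have "(\<Sum>i\<in>I. a i) = (\<Sum>n<N. of_real (P n) * cis (2 * pi * real n * real k / real N))"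
    using \<open>M \<ge> 1\<close> by (simp add: I_def a_def sum.cartesian_product' field_simps)
  also have "(\<Sum>i\<in>I. (cmod (a i))\<^sup>2 * (\<mu>4 (fst i) - 1))
      = 1 / real M * (\<Sum>n<N. (P n)\<^sup>2 * (\<mu>4 n - 1))"
  proof -
    have "cmod (a i) = \<bar>P (fst i)\<bar> / real M" for i
      by (simp add: a_def norm_mult del: of_real_divide)
    then show ?thesis
      using \<open>M \<ge> 1\<close>
      by (simp add: I_def sum.cartesian_product' power_divide sum_distrib_left power2_eq_square)
  qed
  finally show ?thesis .
qed

theorem theorem1:
  fixes \<Omega> :: "'a measure" and N M Q q :: nat and P :: "nat \<Rightarrow> real"
    and s :: "nat \<Rightarrow> nat \<Rightarrow> 'a \<Rightarrow> complex" and \<mu>4 :: "nat \<Rightarrow> real"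
    and \<sigma>\<alpha> :: "nat \<Rightarrow> real" and \<sigma>z2 :: real
  assumes "prob_space \<Omega>"
    and "N \<ge> 2" and "M \<ge> 1"
    and "\<And>n. n < N \<Longrightarrow> P n \<ge> 0"
    and "\<And>n m. n < N \<Longrightarrow> m \<in> {1..M} \<Longrightarrow> s n m \<in> borel_measurable \<Omega>"
    and "prob_space.indep_vars \<Omega> (\<lambda>_. borel) (\<lambda>(n, m). s n m) ({..<N} \<times> {1..M})"
    and "\<And>n m. n < N \<Longrightarrow> m \<in> {1..M} \<Longrightarrow> distr \<Omega> borel (s n m) = distr \<Omega> borel (s n 1)"
    and "\<And>n m. n < N \<Longrightarrow> m \<in> {1..M} \<Longrightarrow> integrable \<Omega> (\<lambda>\<omega>. (cmod (s n m \<omega>)) ^ 4)"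
    and "\<And>n m. n < N \<Longrightarrow> m \<in> {1..M} \<Longrightarrow> (\<integral>\<omega>. (cmod (s n m \<omega>))\<^sup>2 \<partial>\<Omega>) = 1"
    and "\<And>n m. n < N \<Longrightarrow> m \<in> {1..M} \<Longrightarrow> (\<integral>\<omega>. (cmod (s n m \<omega>)) ^ 4 \<partial>\<Omega>) = \<mu>4 n"
  shows "(\<integral>\<omega>. (cmod (rbar N M P s 0 \<omega>))\<^sup>2 \<partial>\<Omega>)
           = 1 / real M * (\<Sum>n<N. (P n)\<^sup>2 * (\<mu>4 n - 1)) + (\<Sum>n<N. P n)\<^sup>2
       \<and> (\<Sum>k\<in>{1..N-1}. \<integral>\<omega>. (cmod (rbar N M P s k \<omega>))\<^sup>2 \<partial>\<Omega>)
           = real (N - 1) / real M * (\<Sum>n<N. (P n)\<^sup>2 * (\<mu>4 n - 1))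
             + real N * (\<Sum>n<N. (P n)\<^sup>2) - (\<Sum>n<N. P n)\<^sup>2
       \<and> mf_sinr N \<sigma>\<alpha> Q q
           (\<integral>\<omega>. (cmod (rbar N M P s 0 \<omega>))\<^sup>2 \<partial>\<Omega>)
           (\<Sum>k\<in>{1..N-1}. \<integral>\<omega>. (cmod (rbar N M P s k \<omega>))\<^sup>2 \<partial>\<Omega>)
           (\<sigma>z2 / real M * (\<Sum>n<N. P n))
         = \<sigma>\<alpha> q * (1 / real M * (\<Sum>n<N. (P n)\<^sup>2 * (\<mu>4 n - 1)) + (\<Sum>n<N. P n)\<^sup>2)
           / ((\<Sum>i\<in>{..<Q} - {q}. \<sigma>\<alpha> i) / real (N - 1)
                * (real (N - 1) / real M * (\<Sum>n<N. (P n)\<^sup>2 * (\<mu>4 n - 1))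
                   + real N * (\<Sum>n<N. (P n)\<^sup>2) - (\<Sum>n<N. P n)\<^sup>2)
              + \<sigma>z2 / real M * (\<Sum>n<N. P n))"
proof -
  define C where "C = 1 / real M * (\<Sum>n<N. (P n)\<^sup>2 * (\<mu>4 n - 1))"
  define F where "F k = (cmod (\<Sum>n<N. of_real (P n) * cis (2 * pi * real n * real k / real N)))\<^sup>2"
    for k :: nat
  have moment: "(\<integral>\<omega>. (cmod (rbar N M P s k \<omega>))\<^sup>2 \<partial>\<Omega>) = F k + C" for k
    unfolding F_def C_def
    by (rule expectation_norm_rbar_squared[OF assms(1,3,6,8,9,10)])
  have F0: "F 0 = (\<Sum>n<N. P n)\<^sup>2"
    by (simp add: F_def flip: of_real_sum)
  have "{..<N} = insert 0 {1..N-1}"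
    using \<open>N \<ge> 2\<close> by auto
  then have "F 0 + (\<Sum>k\<in>{1..N-1}. F k) = real N * (\<Sum>n<N. (P n)\<^sup>2)"
    using sum_norm_dft_squared[where a="\<lambda>n. of_real (P n)" and N=N] by (simp add: F_def)
  then have moment_sum: "(\<Sum>k\<in>{1..N-1}. \<integral>\<omega>. (cmod (rbar N M P s k \<omega>))\<^sup>2 \<partial>\<Omega>)
      = real (N - 1) * C + real N * (\<Sum>n<N. (P n)\<^sup>2) - (\<Sum>n<N. P n)\<^sup>2"
    by (simp add: moment sum.distrib F0)
  show ?thesis
    unfolding mf_sinr_def moment[of 0] F0 moment_sum C_def by simp
qed

end
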